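(* Let $N\ge3$, $\mu\ge0$, assume (K0) and (F0), and let $p>p_S(\alpha)$. Let $t_1\in\mathbb{R}$ and let $w\in C^2(-\infty,t_1)$ be a positive solution of $$w''+aw'-A^{p-1}w+L(t)w^p+\mu g(t)=0\quad (t<t_1)$$ satisfying $0<\limsup_{t\to-\infty}w(t)<\infty$. Then $\lim_{t\to-\infty}w(t)=\gamma$.
   Context: (K0): $K:(0,\infty)\to(0,\infty)$ is continuous and $K(r)=(k_0+o(1))r^{\alpha}$ as $r\to0$ for some $\alpha>-2$, $k_0>0$. (F0): $f:(0,\infty)\to[0,\infty)$ is continuous, not identically zero, and $f(r)=O(r^{\nu})$ as $r\to0$ for some $\nu>-2$. $p_S(\alpha)=\frac{N+2+2\alpha}{N-2}$, $\theta:=\frac{2+\alpha}{p-1}$, $a:=N-2-2\theta$, $c:=N-2-\theta$, $A:=(\theta c)^{1/(p-1)}$, $\gamma:=k_0^{-1/(p-1)}A$, $L(t):=e^{-\alpha t}K(e^t)$, $g(t):=e^{(2+\theta)t}f(e^t)$. (This equation is what $w(t)=e^{\theta t}u(e^t)$ satisfies when $u$ solves $u''+\frac{N-1}{r}u'+K(r)u^p+\mu f(r)=0$.) *)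

theory Defs
  imports "HOL-Analysis.Analysis" "HOL-Library.Landau_Symbols"
begin

definition pS :: "real \<Rightarrow> real \<Rightarrow> real" where
  "pS N \<alpha> = (N + 2 + 2 * \<alpha>) / (N - 2)"

definition theta :: "real \<Rightarrow> real \<Rightarrow> real" where
  "theta \<alpha> p = (2 + \<alpha>) / (p - 1)"

definition acoef :: "real \<Rightarrow> real \<Rightarrow> real \<Rightarrow> real" where
  "acoef N \<alpha> p = N - 2 - 2 * theta \<alpha> p"

definition ccoef :: "real \<Rightarrow> real \<Rightarrow> real \<Rightarrow> real" where
  "ccoef N \<alpha> p = N - 2 - theta \<alpha> p"

definition Acoef :: "real \<Rightarrow> real \<Rightarrow> real \<Rightarrow> real" where
  "Acoef N \<alpha> p = (theta \<alpha> p * ccoef N \<alpha> p) powr (1 / (p - 1))"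

definition gammacoef :: "real \<Rightarrow> real \<Rightarrow> real \<Rightarrow> real \<Rightarrow> real" where
  "gammacoef k0 N \<alpha> p = k0 powr (- 1 / (p - 1)) * Acoef N \<alpha> p"

definition Lfun :: "(real \<Rightarrow> real) \<Rightarrow> real \<Rightarrow> real \<Rightarrow> real" where
  "Lfun K \<alpha> t = exp (- \<alpha> * t) * K (exp t)"

definition gfun :: "(real \<Rightarrow> real) \<Rightarrow> real \<Rightarrow> real \<Rightarrow> real \<Rightarrow> real" where
  "gfun f \<alpha> p t = exp ((2 + theta \<alpha> p) * t) * f (exp t)"

end

theory Submission
  imports Defs
begin

text \<open>
  With \<open>e(t) = (L(t) - k\<^sub>0) w\<^sup>p + \<mu> g(t) \<rightarrow> 0\<close> the equation reads \<open>w'' + a w' + \<phi>(w) + e(t) = 0\<close>,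
  a damped oscillator (\<open>a > 0\<close>) with restoring force \<open>\<phi>(x) = k\<^sub>0 x\<^sup>p - A\<^bsup>p-1\<^esup> x\<close> vanishing at
  \<open>x = \<gamma>\<close>; its potential \<open>\<Phi>\<close> decreases on \<open>(0, \<gamma>]\<close>, increases beyond, and is negative on \<open>(0, \<gamma>]\<close>.
  For small \<open>\<delta>\<close> the modified energy \<open>V = w'\<^sup>2/2 + \<Phi>(w) + \<delta> w' \<phi>(w)\<close> satisfies
  \<open>V' \<le> -c (w'\<^sup>2 + \<phi>(w)\<^sup>2) + O(e\<^sup>2)\<close>.  So far to the left the orbit \<open>(w, w')\<close> can only linger near
  the rest points \<open>(0,0)\<close> and \<open>(\<gamma>,0)\<close>, between visits \<open>V\<close> decreases, and since \<open>V(\<gamma>,0) < V(0,0)\<close>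
  the orbit never moves, forward in time, from near \<open>(\<gamma>,0)\<close> to near \<open>(0,0)\<close>.  If it is near
  \<open>(\<gamma>,0)\<close> at arbitrarily negative times, \<open>\<Phi>(w)\<close> is squeezed between two such visits and
  \<open>w \<rightarrow> \<gamma>\<close>.  Otherwise, far to the left, \<open>\<Phi>(w)\<close> stays close to \<open>\<Phi>(0) = 0\<close>; but \<open>lim sup w > 0\<close>
  makes \<open>w\<close> cross a fixed level \<open>b\<close> with \<open>\<Phi>(b) < 0\<close> again and again.
\<close>

lemma filterlim_exp_at_bot_at_right_0: "filterlim exp (at_right (0::real)) at_bot"
  unfolding filterlim_at using exp_at_bot by auto

lemma tendsto_exp_mult_at_bot: "k > 0 \<Longrightarrow> ((\<lambda>t::real. exp (k * t)) \<longlongrightarrow> 0) at_bot"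
  by (rule filterlim_compose[OF exp_at_bot],
      rule filterlim_tendsto_pos_mult_at_bot[OF tendsto_const _ filterlim_ident])

lemma damped_derivative_upper_bound:
  fixes w v v' :: "real \<Rightarrow> real" and a H m M T t :: real
  assumes a: "a > 0" and H: "H \<ge> 0"
    and dw: "\<And>s. s \<le> T \<Longrightarrow> (w has_real_derivative v s) (at s)"
    and dv: "\<And>s. s \<le> T \<Longrightarrow> (v has_real_derivative v' s) (at s)"
    and damped: "\<And>s. s \<le> T \<Longrightarrow> v' s + a * v s \<le> H"
    and bounded: "\<And>s. s \<le> T \<Longrightarrow> m \<le> w s \<and> w s \<le> M"
    and t: "t \<le> T"
  shows "v t \<le> H / a + 1"
proof (rule ccontr)
  assume "\<not> v t \<le> H / a + 1"
  then have vt: "H / a + 1 < v t" by simp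
  \<comment> \<open>\<open>exp (a s) (v s - H/a)\<close> is nonincreasing, so \<open>v\<close> stays above \<open>v t\<close> to the left of \<open>t\<close>\<close>
  have v_ge: "1 \<le> v s" if s: "s \<le> t" for s
  proof -
    define u where "u x = exp (a * x) * (v x - H / a)" for x
    have "u t \<le> u s"
    proof (rule DERIV_nonpos_imp_nonincreasing[OF s])
      fix x assume x: "s \<le> x" "x \<le> t"
      have "(u has_real_derivative exp (a * x) * (v' x + a * v x - H)) (at x)"
        unfolding u_def using dv[of x] x t a
        by (auto intro!: derivative_eq_intros simp: algebra_simps)
      moreover have "exp (a * x) * (v' x + a * v x - H) \<le> 0"
        using damped[of x] x t by (simp add: mult_nonneg_nonpos)
      ultimately show "\<exists>y. (u has_real_derivative y) (at x) \<and> y \<le> 0" by blast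
    qed
    moreover have "exp (a * s) * (v t - H / a) \<le> exp (a * t) * (v t - H / a)"
      using s a vt by (intro mult_right_mono) auto
    ultimately have "exp (a * s) * (v t - H / a) \<le> exp (a * s) * (v s - H / a)"
      unfolding u_def by linarith
    then have "v t \<le> v s" by simp
    moreover have "0 \<le> H / a" using H a by simp
    ultimately show ?thesis using vt by linarith
  qed
  define s where "s = t - (M - m) - 1"
  have "w s - s \<le> w t - t"
  proof (rule DERIV_nonneg_imp_nondecreasing[of s t "\<lambda>x. w x - x"])
    show "s \<le> t" using bounded[OF t] by (simp add: s_def)
    fix x assume "s \<le> x" "x \<le> t"
    then show "\<exists>y. ((\<lambda>x. w x - x) has_real_derivative y) (at x) \<and> y \<ge> 0"
      using dw[of x] v_ge[of x] t by (intro exI[of _ "v x - 1"]) (auto intro!: derivative_eq_intros)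
  qed
  then show False using bounded[of s] bounded[OF t] t by (simp add: s_def)
qed

lemma damped_derivative_bound:
  fixes w v v' :: "real \<Rightarrow> real" and a H m M T t :: real
  assumes a: "a > 0"
    and dw: "\<And>s. s \<le> T \<Longrightarrow> (w has_real_derivative v s) (at s)"
    and dv: "\<And>s. s \<le> T \<Longrightarrow> (v has_real_derivative v' s) (at s)"
    and damped: "\<And>s. s \<le> T \<Longrightarrow> \<bar>v' s + a * v s\<bar> \<le> H"
    and bounded: "\<And>s. s \<le> T \<Longrightarrow> m \<le> w s \<and> w s \<le> M"
    and t: "t \<le> T"
  shows "\<bar>v t\<bar> \<le> H / a + 1"
proof -
  have H: "H \<ge> 0" using damped[OF t] by linarith
  have "v t \<le> H / a + 1"
    by (rule damped_derivative_upper_bound[OF a H dw dv abs_le_D1[OF damped] bounded t])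
  moreover have "- v t \<le> H / a + 1"
  proof (rule damped_derivative_upper_bound[OF a H _ _ _ _ t, of "\<lambda>s. - w s" _ "\<lambda>s. - v' s" "- M" "- m"])
    show "((\<lambda>s. - w s) has_real_derivative - v s) (at s)" if "s \<le> T" for s
      using dw[OF that] by (rule DERIV_minus)
    show "((\<lambda>s. - v s) has_real_derivative - v' s) (at s)" if "s \<le> T" for s
      using dv[OF that] by (rule DERIV_minus)
  qed (use damped bounded in \<open>fastforce+\<close>)
  ultimately show ?thesis by linarith
qed

text \<open>
  The left-hand side is the derivative of the modified energy \<open>v\<^sup>2/2 + \<Phi>(w) + \<delta> v \<phi>(w)\<close> along
  \<open>v' = - a v - \<phi>(w) - e\<close>, written with \<open>f = \<phi>(w)\<close> and \<open>q = \<phi>'(w)\<close>.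
\<close>

lemma lyapunov_quadratic_estimate:
  fixes v f e q a \<delta> P :: real
  assumes a: "a > 0" and \<delta>: "\<delta> > 0" and q: "\<bar>q\<bar> \<le> P" and "\<delta> * P \<le> a / 4" and "\<delta> * a \<le> 1 / 4"
  shows "v * (- a * v - f - e) + f * v + \<delta> * ((- a * v - f - e) * f + v * (q * v))
         \<le> - (a / 4) * v\<^sup>2 - (\<delta> / 2) * f\<^sup>2 + (1 / a + \<delta>) * e\<^sup>2"
proof -
  have square_forms: "(a / 4) * v\<^sup>2 + v * e + e\<^sup>2 / a = (a / 4) * (v + 2 * e / a)\<^sup>2"
    "(a / 4) * v\<^sup>2 + a * \<delta> * v * f + a * \<delta>\<^sup>2 * f\<^sup>2 = (a / 4) * (v + 2 * \<delta> * f)\<^sup>2"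
    "(\<delta> / 4) * f\<^sup>2 + \<delta> * f * e + \<delta> * e\<^sup>2 = \<delta> * (f / 2 + e)\<^sup>2"
    using a by (simp_all add: field_simps power2_eq_square)
  have squares: "0 \<le> (a / 4) * v\<^sup>2 + v * e + e\<^sup>2 / a"
      "0 \<le> (a / 4) * v\<^sup>2 + a * \<delta> * v * f + a * \<delta>\<^sup>2 * f\<^sup>2"
      "0 \<le> (\<delta> / 4) * f\<^sup>2 + \<delta> * f * e + \<delta> * e\<^sup>2"
    unfolding square_forms using a \<delta> by simp_all
  have "a * \<delta>\<^sup>2 * f\<^sup>2 = (\<delta> * a) * (\<delta> * f\<^sup>2)" by (simp add: power2_eq_square)
  also have "\<dots> \<le> (1 / 4) * (\<delta> * f\<^sup>2)" using assms by (intro mult_right_mono) auto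
  finally have "a * \<delta>\<^sup>2 * f\<^sup>2 \<le> (\<delta> / 4) * f\<^sup>2" by simp
  moreover have "\<delta> * q * v\<^sup>2 \<le> (a / 4) * v\<^sup>2"
  proof -
    have "\<delta> * q \<le> \<delta> * P" using q \<delta> by (intro mult_left_mono) auto
    then have "\<delta> * q \<le> a / 4" using assms by linarith
    then show ?thesis by (intro mult_right_mono) auto
  qed
  ultimately show ?thesis using squares by (simp add: algebra_simps power2_eq_square)
qed


lemma continuous_on_atMost_if_derivative:
  assumes "\<And>s. s \<le> T \<Longrightarrow> (f has_real_derivative f' s) (at s)"
  shows "continuous_on {..T} f"
  by (intro continuous_at_imp_continuous_on ballI) (use assms DERIV_isCont in auto)

lemma continuous_on_interval_if_derivative:
  assumes "\<And>s. s \<le> T \<Longrightarrow> (f has_real_derivative f' s) (at s)" and "z \<le> T"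
  shows "continuous_on {y..z} f"
  using continuous_on_subset[OF continuous_on_atMost_if_derivative[OF assms(1)]] assms(2) by auto

lemma closed_bounded_pair_atMost:
  fixes f h :: "real \<Rightarrow> real"
  assumes f: "continuous_on {..T} f" and h: "continuous_on {..T} h" and "T' \<le> T"
  shows "closed {t. t \<le> T' \<and> \<bar>f t\<bar> \<le> r1 \<and> \<bar>h t\<bar> \<le> r2}"
proof -
  \<comment> \<open>freezing the functions beyond \<open>T\<close> makes them continuous on all of \<open>\<real>\<close>\<close>
  have "continuous_on UNIV (\<lambda>t. \<bar>f (min t T)\<bar>)" "continuous_on UNIV (\<lambda>t. \<bar>h (min t T)\<bar>)"
    by (intro continuous_intros continuous_on_compose2[OF f] continuous_on_compose2[OF h];
        auto intro!: continuous_intros)+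
  then have "closed ({t. t \<le> T'} \<inter> {t. \<bar>f (min t T)\<bar> \<le> r1} \<inter> {t. \<bar>h (min t T)\<bar> \<le> r2})"
    by (intro closed_Int closed_Collect_le) (auto intro: continuous_intros)
  moreover have "{t. t \<le> T' \<and> \<bar>f t\<bar> \<le> r1 \<and> \<bar>h t\<bar> \<le> r2} =
      {t. t \<le> T'} \<inter> {t. \<bar>f (min t T)\<bar> \<le> r1} \<inter> {t. \<bar>h (min t T)\<bar> \<le> r2}"
    using \<open>T' \<le> T\<close> by (auto simp: min_def)
  ultimately show ?thesis by simp
qed

lemma closed_real_gap_around:
  fixes S :: "real set"
  assumes S: "closed S" and t: "t \<notin> S" and l: "l \<in> S" "l \<le> t" and u: "u \<in> S" "t \<le> u"
  obtains z1 z2 where "z1 \<in> S" "z2 \<in> S" "z1 < t" "t < z2" "z2 \<le> u"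
    "\<And>s. z1 < s \<Longrightarrow> s < z2 \<Longrightarrow> s \<notin> S"
proof -
  define z1 where "z1 = Sup (S \<inter> {..t})"
  define z2 where "z2 = Inf (S \<inter> {t..})"
  have bdd: "bdd_above (S \<inter> {..t})" "bdd_below (S \<inter> {t..})" by (auto intro: bdd_aboveI bdd_belowI)
  have ne: "S \<inter> {..t} \<noteq> {}" "S \<inter> {t..} \<noteq> {}" using l u by auto
  have cl: "closed (S \<inter> {..t})" "closed (S \<inter> {t..})" using S by (auto intro: closed_Int)
  have "z1 \<in> S \<inter> {..t}" "z2 \<in> S \<inter> {t..}"
    unfolding z1_def z2_def
    by (rule closed_contains_Sup[OF ne(1) bdd(1) cl(1)], rule closed_contains_Inf[OF ne(2) bdd(2) cl(2)])
  moreover have "z2 \<le> u" unfolding z2_def using u bdd by (intro cInf_lower) auto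
  moreover have "s \<notin> S" if "z1 < s" "s < z2" for s
    using cSup_upper[OF _ bdd(1), of s] cInf_lower[OF _ bdd(2), of s] that
    unfolding z1_def z2_def by (cases "s \<le> t") auto
  ultimately show ?thesis using that t by (metis Int_iff atLeast_iff atMost_iff order_le_less)
qed

lemma closed_real_gap_between:
  fixes A B :: "real set"
  assumes A: "closed A" and B: "closed B" and disjoint: "A \<inter> B = {}"
    and a: "a \<in> A" and b: "b \<in> B" and "a < b"
  obtains a' b' where "a' \<in> A" "b' \<in> B" "a' < b'" "\<And>s. a' < s \<Longrightarrow> s < b' \<Longrightarrow> s \<notin> A \<union> B"
proof -
  define b' where "b' = Inf (B \<inter> {a..b})"
  have bdd_b: "bdd_below (B \<inter> {a..b})" by (auto intro: bdd_belowI)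
  have b': "b' \<in> B \<inter> {a..b}"
    unfolding b'_def using B b \<open>a < b\<close> bdd_b by (intro closed_contains_Inf closed_Int) auto
  define a' where "a' = Sup (A \<inter> {a..b'})"
  have bdd_a: "bdd_above (A \<inter> {a..b'})" by (auto intro: bdd_aboveI)
  have a': "a' \<in> A \<inter> {a..b'}"
    unfolding a'_def using A a b' bdd_a by (intro closed_contains_Sup closed_Int) auto
  have "a' \<noteq> b'" using a' b' disjoint by auto
  then have "a' < b'" using a' by auto
  moreover have "s \<notin> A \<union> B" if s: "a' < s" "s < b'" for s
  proof
    assume "s \<in> A \<union> B"
    then show False
    proof
      assume "s \<in> A"
      then have "s \<le> a'" unfolding a'_def using s a' bdd_a by (intro cSup_upper) auto
      then show False using s by simp
    next
      assume "s \<in> B"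
      then have "b' \<le> s" unfolding b'_def using s a' b' bdd_b by (intro cInf_lower) auto
      then show False using s by simp
    qed
  qed
  ultimately show ?thesis using that a' b' by blast
qed

section \<open>The damped oscillator and its modified energy\<close>

text \<open>
  \<open>Ap\<close> stands for \<open>A\<^bsup>p-1\<^esup>\<close>, \<open>g\<close> for \<open>\<gamma>\<close> and \<open>v\<close> for \<open>w'\<close>.
\<close>

locale damped_oscillator =
  fixes a k0 p g Ap M B T :: real and w v v' e :: "real \<Rightarrow> real"
  assumes a_pos: "a > 0" and k0_pos: "k0 > 0" and p_gt_1: "p > 1" and g_pos: "g > 0"
    and Ap_eq: "Ap = k0 * g powr (p - 1)"
    and dw: "\<And>t. t \<le> T \<Longrightarrow> (w has_real_derivative v t) (at t)"
    and dv: "\<And>t. t \<le> T \<Longrightarrow> (v has_real_derivative v' t) (at t)"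
    and equation: "\<And>t. t \<le> T \<Longrightarrow> v' t = - a * v t + Ap * w t - k0 * w t powr p - e t"
    and w_pos: "\<And>t. t \<le> T \<Longrightarrow> 0 < w t" and w_le: "\<And>t. t \<le> T \<Longrightarrow> w t \<le> M"
    and v_bound: "\<And>t. t \<le> T \<Longrightarrow> \<bar>v t\<bar> \<le> B"
    and e_tendsto: "(e \<longlongrightarrow> 0) at_bot"
begin

definition "force x = - Ap * x + k0 * x powr p"
definition "potential x = - Ap * x\<^sup>2 / 2 + k0 * x powr (p + 1) / (p + 1)"
definition "force_deriv x = - Ap + k0 * p * x powr (p - 1)"
definition "force_deriv_max = Ap + k0 * p * M powr (p - 1)"

definition "\<delta> = min (a / (4 * (force_deriv_max + 1))) (1 / (4 * a))"
definition "decay = min (a / 4) (\<delta> / 2)"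
definition "gain = 1 / a + \<delta>"

definition "energy t = (v t)\<^sup>2 / 2 + potential (w t) + \<delta> * v t * force (w t)"
definition "energy_deriv t =
  v t * v' t + force (w t) * v t + \<delta> * (v' t * force (w t) + v t * (force_deriv (w t) * v t))"
definition "dissipation t = (v t)\<^sup>2 + (force (w t))\<^sup>2"

lemma Ap_pos: "Ap > 0"
  using k0_pos g_pos by (simp add: Ap_eq)

lemma force_has_derivative: "x > 0 \<Longrightarrow> (force has_real_derivative force_deriv x) (at x)"
  unfolding force_def force_deriv_def by (auto intro!: derivative_eq_intros simp: powr_diff)

lemma potential_has_derivative: "x > 0 \<Longrightarrow> (potential has_real_derivative force x) (at x)"
proof -
  assume x: "x > 0"
  have "k0 * ((p + 1) * x powr p) / (p + 1) = k0 * x powr p" using p_gt_1 by simp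
  then show ?thesis unfolding force_def potential_def using p_gt_1 x
    by (auto intro!: derivative_eq_intros)
qed

lemma isCont_potential: "x > 0 \<Longrightarrow> isCont potential x"
  using potential_has_derivative DERIV_isCont by blast

lemma continuous_on_potential: "0 < x \<Longrightarrow> continuous_on {x..y} potential"
  by (intro continuous_at_imp_continuous_on ballI isCont_potential) auto

lemma abs_force_deriv_le: "0 < x \<Longrightarrow> x \<le> M \<Longrightarrow> \<bar>force_deriv x\<bar> \<le> force_deriv_max"
proof -
  assume x: "0 < x" "x \<le> M"
  have "x powr (p - 1) \<le> M powr (p - 1)" using x p_gt_1 by (intro powr_mono2) auto
  then have "k0 * p * x powr (p - 1) \<le> k0 * p * M powr (p - 1)" using k0_pos p_gt_1 by simp
  moreover have "0 \<le> k0 * p * x powr (p - 1)" using k0_pos p_gt_1 by simp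
  ultimately show ?thesis
    unfolding force_deriv_def force_deriv_max_def using Ap_pos by (simp add: abs_le_iff)
qed

lemma force_deriv_max_pos: "force_deriv_max > 0"
  unfolding force_deriv_max_def using Ap_pos k0_pos p_gt_1 by (simp add: add_pos_nonneg)

lemma \<delta>_pos: "\<delta> > 0"
  unfolding \<delta>_def using a_pos force_deriv_max_pos by simp

lemma decay_pos: "decay > 0"
  unfolding decay_def using a_pos \<delta>_pos by simp

lemma energy_has_derivative: "t \<le> T \<Longrightarrow> (energy has_real_derivative energy_deriv t) (at t)"
  unfolding energy_def energy_deriv_def
  using DERIV_chain2[OF potential_has_derivative[OF w_pos] dw]
    DERIV_chain2[OF force_has_derivative[OF w_pos] dw] dv
  by (auto intro!: derivative_eq_intros simp: algebra_simps)

lemma energy_deriv_le: "t \<le> T \<Longrightarrow> energy_deriv t \<le> - decay * dissipation t + gain * (e t)\<^sup>2"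
proof -
  assume t: "t \<le> T"
  have v': "v' t = - a * v t - force (w t) - e t" using equation[OF t] by (simp add: force_def)
  have "\<delta> * force_deriv_max \<le> a / (4 * (force_deriv_max + 1)) * (force_deriv_max + 1)"
    using force_deriv_max_pos a_pos by (intro mult_mono) (auto simp: \<delta>_def)
  also have "\<dots> = a / 4" using force_deriv_max_pos by (simp add: field_simps)
  finally have \<delta>_max: "\<delta> * force_deriv_max \<le> a / 4" .
  have "\<delta> * a \<le> 1 / (4 * a) * a" using a_pos by (intro mult_right_mono) (auto simp: \<delta>_def)
  then have \<delta>_a: "\<delta> * a \<le> 1 / 4" using a_pos by simp
  have "energy_deriv t \<le> - (a / 4) * (v t)\<^sup>2 - (\<delta> / 2) * (force (w t))\<^sup>2 + gain * (e t)\<^sup>2"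
    unfolding energy_deriv_def v' gain_def
    by (rule lyapunov_quadratic_estimate[OF a_pos \<delta>_pos abs_force_deriv_le[OF w_pos[OF t] w_le[OF t]] \<delta>_max \<delta>_a])
  moreover have "- (a / 4) * (v t)\<^sup>2 \<le> - decay * (v t)\<^sup>2" "- (\<delta> / 2) * (force (w t))\<^sup>2 \<le> - decay * (force (w t))\<^sup>2"
    unfolding decay_def by (intro mult_right_mono; simp)+
  ultimately show ?thesis unfolding dissipation_def by (simp add: algebra_simps)
qed

lemma force_eq: "x > 0 \<Longrightarrow> force x = k0 * x * (x powr (p - 1) - g powr (p - 1))"
proof -
  assume "x > 0"
  then have "force x = - Ap * x + k0 * (x * x powr (p - 1))"
    by (simp add: force_def powr_mult_base)
  then show ?thesis by (simp add: Ap_eq algebra_simps)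
qed

lemma force_equilibrium: "force g = 0"
  using force_eq[OF g_pos] by simp

lemma force_neg: "0 < x \<Longrightarrow> x < g \<Longrightarrow> force x < 0"
  using powr_less_mono2[of "p - 1" x g] p_gt_1 k0_pos by (simp add: force_eq mult_pos_neg)

lemma force_pos: "g < x \<Longrightarrow> force x > 0"
  using powr_less_mono2[of "p - 1" g x] p_gt_1 k0_pos g_pos by (simp add: force_eq)

lemma potential_strict_antimono: "0 < x \<Longrightarrow> x < y \<Longrightarrow> y \<le> g \<Longrightarrow> potential y < potential x"
  by (rule DERIV_neg_imp_decreasing_open[OF _ _ continuous_on_potential])
    (use potential_has_derivative force_neg in force)+

lemma potential_strict_mono: "g \<le> x \<Longrightarrow> x < y \<Longrightarrow> potential x < potential y"
proof (rule DERIV_pos_imp_increasing_open[OF _ _ continuous_on_potential])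
  fix t assume "g \<le> x" "x < t"
  then show "\<exists>y. (potential has_real_derivative y) (at t) \<and> 0 < y"
    using potential_has_derivative[of t] force_pos[of t] g_pos by auto
qed (use g_pos in auto)

lemma potential_gap_near_equilibrium:
  assumes r: "0 < r" "r < g"
  obtains \<Delta> where "\<Delta> > 0" "\<And>x. 0 < x \<Longrightarrow> potential x < potential g + \<Delta> \<Longrightarrow> \<bar>x - g\<bar> < r"
proof
  define \<Delta> where "\<Delta> = min (potential (g - r)) (potential (g + r)) - potential g"
  show "\<Delta> > 0"
    unfolding \<Delta>_def using potential_strict_antimono[of "g - r" g] potential_strict_mono[of g "g + r"] r by auto
  show "\<bar>x - g\<bar> < r" if "0 < x" "potential x < potential g + \<Delta>" for x
  proof (rule ccontr)
    assume "\<not> \<bar>x - g\<bar> < r"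
    then have "x \<le> g - r \<or> g + r \<le> x" by auto
    then have "min (potential (g - r)) (potential (g + r)) \<le> potential x"
      using potential_strict_antimono[of x "g - r"] potential_strict_mono[of "g + r" x] that r g_pos
      by (fastforce simp: order_le_less)
    then show False using that unfolding \<Delta>_def by simp
  qed
qed

lemma potential_neg: "0 < x \<Longrightarrow> x \<le> g \<Longrightarrow> potential x < 0"
proof -
  assume x: "0 < x" "x \<le> g"
  have "x powr (p + 1) = x powr 2 * x powr (p - 1)"
    using powr_add[of x 2 "p - 1"] by (simp add: add.commute)
  then have "x powr (p + 1) = x\<^sup>2 * x powr (p - 1)"
    using x by (simp add: powr_numeral)
  moreover have "x powr (p - 1) \<le> g powr (p - 1)" using x p_gt_1 by (intro powr_mono2) auto
  ultimately have "k0 * x powr (p + 1) \<le> Ap * x\<^sup>2"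
    unfolding Ap_eq using k0_pos by (simp add: mult_left_mono mult.commute mult.left_commute)
  then have "potential x \<le> - Ap * x\<^sup>2 / 2 + Ap * x\<^sup>2 / (p + 1)"
    unfolding potential_def using p_gt_1 by (simp add: divide_right_mono)
  also have "\<dots> < 0"
  proof -
    have "1 / (p + 1) < 1 / 2" using p_gt_1 by (simp add: field_simps)
    then have "Ap * x\<^sup>2 * (1 / (p + 1)) < Ap * x\<^sup>2 * (1 / 2)"
      using Ap_pos x by (intro mult_strict_left_mono) auto
    then show ?thesis by simp
  qed
  finally show ?thesis .
qed


lemma isCont_force: "x > 0 \<Longrightarrow> isCont force x"
  using force_has_derivative DERIV_isCont by blast

definition "force_gap \<eta> = min (k0 * \<eta> * (g powr (p - 1) - (g - \<eta>) powr (p - 1)))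
  (k0 * g * ((g + \<eta>) powr (p - 1) - g powr (p - 1)))"

lemma force_gap_pos: "0 < \<eta> \<Longrightarrow> 2 * \<eta> < g \<Longrightarrow> force_gap \<eta> > 0"
  using powr_less_mono2[of "p - 1" "g - \<eta>" g] powr_less_mono2[of "p - 1" g "g + \<eta>"]
    p_gt_1 k0_pos g_pos
  unfolding force_gap_def by simp

lemma force_gap_le:
  assumes \<eta>: "0 < \<eta>" "2 * \<eta> < g" and x: "\<eta> \<le> x" "\<eta> \<le> \<bar>x - g\<bar>"
  shows "force_gap \<eta> \<le> \<bar>force x\<bar>"
proof (cases "x < g")
  case True
  then have "x \<le> g - \<eta>" using x by simp
  then have "x powr (p - 1) \<le> (g - \<eta>) powr (p - 1)" "(g - \<eta>) powr (p - 1) \<le> g powr (p - 1)"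
    using \<eta> x p_gt_1 by (auto intro!: powr_mono2)
  then have "k0 * \<eta> * (g powr (p - 1) - (g - \<eta>) powr (p - 1))
      \<le> k0 * x * (g powr (p - 1) - x powr (p - 1))"
    using \<eta> x k0_pos by (intro mult_mono) auto
  moreover have "\<bar>force x\<bar> = - force x" using force_neg[OF _ True] \<eta> x by simp
  then have "\<bar>force x\<bar> = k0 * x * (g powr (p - 1) - x powr (p - 1))"
    using force_eq[of x] \<eta> x by (simp add: algebra_simps)
  ultimately show ?thesis unfolding force_gap_def by simp
next
  case False
  then have "g + \<eta> \<le> x" using x by simp
  then have "(g + \<eta>) powr (p - 1) \<le> x powr (p - 1)" "g powr (p - 1) \<le> (g + \<eta>) powr (p - 1)"
    using \<eta> g_pos p_gt_1 by (auto intro!: powr_mono2)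
  then have "k0 * g * ((g + \<eta>) powr (p - 1) - g powr (p - 1))
      \<le> k0 * x * (x powr (p - 1) - g powr (p - 1))"
    using \<eta> k0_pos g_pos \<open>g + \<eta> \<le> x\<close> by (intro mult_mono) auto
  moreover have "\<bar>force x\<bar> = k0 * x * (x powr (p - 1) - g powr (p - 1))"
    using force_pos[of x] force_eq[of x] \<open>g + \<eta> \<le> x\<close> \<eta> by simp
  ultimately show ?thesis unfolding force_gap_def by simp
qed

lemma near_equilibrium:
  assumes "\<sigma> > 0"
  obtains \<eta> where "\<eta> > 0"
    "\<And>x. \<bar>x - g\<bar> \<le> \<eta> \<Longrightarrow> \<bar>potential x - potential g\<bar> \<le> \<sigma> \<and> \<bar>force x\<bar> \<le> 1"
proof -
  obtain d1 where d1: "d1 > 0" "\<And>x. dist x g < d1 \<Longrightarrow> dist (potential x) (potential g) < \<sigma>"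
    using isCont_potential[OF g_pos] assms unfolding continuous_at_eps_delta by blast
  obtain d2 where d2: "d2 > 0" "\<And>x. dist x g < d2 \<Longrightarrow> dist (force x) (force g) < 1"
    using isCont_force[OF g_pos] unfolding continuous_at_eps_delta by (metis zero_less_one)
  show ?thesis
  proof
    show "min d1 d2 / 2 > 0" using d1 d2 by simp
    fix x assume "\<bar>x - g\<bar> \<le> min d1 d2 / 2"
    then have "dist x g < d1" "dist x g < d2" using d1 d2 by (auto simp: dist_real_def)
    then show "\<bar>potential x - potential g\<bar> \<le> \<sigma> \<and> \<bar>force x\<bar> \<le> 1"
      using d1 d2 force_equilibrium by (auto simp: dist_real_def less_imp_le)
  qed
qed

lemma abs_potential_force_le:
  assumes "0 < x"
  shows "\<bar>potential x\<bar> \<le> Ap * x\<^sup>2 + k0 * x powr (p + 1)" "\<bar>force x\<bar> \<le> Ap * x + k0 * x powr p"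
proof -
  have "x powr (p + 1) * 1 \<le> x powr (p + 1) * (p + 1)" using p_gt_1 by (intro mult_left_mono) auto
  then have "k0 * x powr (p + 1) / (p + 1) \<le> k0 * x powr (p + 1)"
    using k0_pos p_gt_1 by (simp add: divide_le_eq)
  moreover have "0 \<le> Ap * x\<^sup>2" "0 \<le> k0 * x powr (p + 1) / (p + 1)" using Ap_pos k0_pos p_gt_1 by simp_all
  ultimately show "\<bar>potential x\<bar> \<le> Ap * x\<^sup>2 + k0 * x powr (p + 1)"
    unfolding potential_def by (simp add: abs_le_iff)
  show "\<bar>force x\<bar> \<le> Ap * x + k0 * x powr p"
    unfolding force_def using Ap_pos k0_pos assms by (simp add: abs_le_iff)
qed

lemma near_zero:
  assumes x: "0 < x" "x \<le> \<eta>" "\<eta> \<le> 1"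
  shows "\<bar>potential x\<bar> \<le> (Ap + k0) * \<eta>" "\<bar>force x\<bar> \<le> (Ap + k0) * \<eta>"
proof -
  have "x powr (p + 1) \<le> x" "x powr p \<le> x" "x\<^sup>2 \<le> x"
    using powr_mono'[of 1 "p + 1" x] powr_mono'[of 1 p x] x p_gt_1
    by (auto simp: power2_eq_square mult_le_cancel_right1)
  then have "Ap * x\<^sup>2 + k0 * x powr (p + 1) \<le> Ap * x + k0 * x" "Ap * x + k0 * x powr p \<le> Ap * x + k0 * x"
    using Ap_pos k0_pos by (auto intro!: add_mono mult_left_mono)
  moreover have "Ap * x + k0 * x \<le> (Ap + k0) * \<eta>"
    using x Ap_pos k0_pos by (simp add: distrib_right add_mono)
  ultimately show "\<bar>potential x\<bar> \<le> (Ap + k0) * \<eta>" "\<bar>force x\<bar> \<le> (Ap + k0) * \<eta>"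
    using abs_potential_force_le[OF x(1)] by linarith+
qed

lemma abs_force_v_le: "\<bar>force (w t) * v t\<bar> \<le> dissipation t / 2"
proof -
  have "0 \<le> (\<bar>force (w t)\<bar> - \<bar>v t\<bar>)\<^sup>2" by simp
  then have "2 * (\<bar>force (w t)\<bar> * \<bar>v t\<bar>) \<le> (force (w t))\<^sup>2 + (v t)\<^sup>2"
    by (simp add: power2_eq_square algebra_simps)
  then show ?thesis unfolding dissipation_def by (simp add: abs_mult)
qed

definition "energy_max = B\<^sup>2 + Ap * M\<^sup>2 + k0 * M powr (p + 1) + \<delta> * B * (Ap * M + k0 * M powr p)"

lemma abs_energy_le_sum: "\<bar>energy t\<bar> \<le> (v t)\<^sup>2 / 2 + \<bar>potential (w t)\<bar> + \<bar>\<delta> * v t * force (w t)\<bar>"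
  unfolding energy_def by (simp add: abs_triangle_ineq order_trans[OF abs_triangle_ineq] add_mono)

lemma abs_energy_le: "t \<le> T \<Longrightarrow> \<bar>energy t\<bar> \<le> energy_max"
proof -
  assume t: "t \<le> T"
  define x where "x = w t"
  have x: "0 < x" "x \<le> M" using w_pos[OF t] w_le[OF t] by (auto simp: x_def)
  have "x powr (p + 1) \<le> M powr (p + 1)" "x powr p \<le> M powr p" "x\<^sup>2 \<le> M\<^sup>2"
    using x p_gt_1 by (auto intro!: powr_mono2 power_mono)
  then have "Ap * x\<^sup>2 + k0 * x powr (p + 1) \<le> Ap * M\<^sup>2 + k0 * M powr (p + 1)"
    "Ap * x + k0 * x powr p \<le> Ap * M + k0 * M powr p"
    using Ap_pos k0_pos x by (auto intro!: add_mono mult_left_mono)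
  then have potential_le: "\<bar>potential x\<bar> \<le> Ap * M\<^sup>2 + k0 * M powr (p + 1)"
    and force_le: "\<bar>force x\<bar> \<le> Ap * M + k0 * M powr p"
    using abs_potential_force_le[OF x(1)] by linarith+
  have "\<bar>v t\<bar> \<le> B" using v_bound[OF t] .
  then have "(v t)\<^sup>2 \<le> B\<^sup>2" "\<bar>\<delta> * v t * force x\<bar> \<le> \<delta> * B * (Ap * M + k0 * M powr p)"
    using force_le \<delta>_pos
    by (auto simp: abs_mult mult_mono mult.assoc intro: power2_le_iff_abs_le[THEN iffD2] order_trans[OF abs_ge_zero])
  then show ?thesis
    using abs_energy_le_sum[of t] potential_le zero_le_power2[of "v t"] unfolding energy_max_def x_def by linarith
qed

end

section \<open>Trapping near the rest points\<close>

locale oscillator_traps = damped_oscillator +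
  fixes \<eta> \<rho> T' s0 s1 :: real
  assumes \<eta>_pos: "\<eta> > 0" and \<eta>_small: "2 * \<eta> < g" and T'_le: "T' \<le> T" and \<rho>_pos: "\<rho> > 0"
    and dissipation_off_traps: "\<And>t. t \<le> T' \<Longrightarrow> \<not> (\<bar>v t\<bar> \<le> \<eta> \<and> w t \<le> \<eta>) \<Longrightarrow>
      \<not> (\<bar>v t\<bar> \<le> \<eta> \<and> \<bar>w t - g\<bar> \<le> \<eta>) \<Longrightarrow> \<rho> \<le> dissipation t"
    and perturbation_small: "\<And>t. t \<le> T' \<Longrightarrow> gain * (e t)\<^sup>2 \<le> decay / 2 * \<rho>"
    and energy_trap0: "\<And>t. t \<le> T \<Longrightarrow> \<bar>v t\<bar> \<le> \<eta> \<Longrightarrow> w t \<le> \<eta> \<Longrightarrow>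
      \<bar>energy t\<bar> \<le> s0 \<and> - s0 \<le> potential (w t)"
    and energy_trapg: "\<And>t. t \<le> T \<Longrightarrow> \<bar>v t\<bar> \<le> \<eta> \<Longrightarrow> \<bar>w t - g\<bar> \<le> \<eta> \<Longrightarrow>
      \<bar>energy t - potential g\<bar> \<le> s1 \<and> potential (w t) \<le> potential g + s1"
    and traps_separated: "s0 + s1 < - potential g"
begin

definition "trap0 = {t. t \<le> T' \<and> \<bar>v t\<bar> \<le> \<eta> \<and> \<bar>w t\<bar> \<le> \<eta>}"
definition "trapg = {t. t \<le> T' \<and> \<bar>v t\<bar> \<le> \<eta> \<and> \<bar>w t - g\<bar> \<le> \<eta>}"
definition "traps = trap0 \<union> trapg"

lemma trap0_iff: "t \<in> trap0 \<longleftrightarrow> t \<le> T' \<and> \<bar>v t\<bar> \<le> \<eta> \<and> w t \<le> \<eta>"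
  unfolding trap0_def using w_pos[of t] T'_le by auto

lemma closed_trap0: "closed trap0"
  unfolding trap0_def
  by (rule closed_bounded_pair_atMost[OF continuous_on_atMost_if_derivative[OF dv]
        continuous_on_atMost_if_derivative[OF dw] T'_le])

lemma closed_trapg: "closed trapg"
  unfolding trapg_def
  by (rule closed_bounded_pair_atMost[OF continuous_on_atMost_if_derivative[OF dv]
        continuous_on_diff[OF continuous_on_atMost_if_derivative[OF dw] continuous_on_const] T'_le])

lemma closed_traps: "closed traps"
  unfolding traps_def using closed_trap0 closed_trapg by (rule closed_Un)

lemma trap0_trapg_disjoint: "trap0 \<inter> trapg = {}"
  unfolding trap0_def trapg_def using \<eta>_small by (auto simp: abs_le_iff)

lemma traps_le: "t \<in> traps \<Longrightarrow> t \<le> T'"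
  unfolding traps_def trap0_def trapg_def by auto

lemma energy_deriv_off_traps:
  assumes "t \<le> T'" "t \<notin> traps"
  shows "energy_deriv t \<le> - (decay / 2) * dissipation t"
proof -
  have "\<rho> \<le> dissipation t"
    using dissipation_off_traps assms by (auto simp: traps_def trap0_iff trapg_def)
  then have "decay / 2 * \<rho> \<le> decay / 2 * dissipation t" using decay_pos by (intro mult_left_mono) auto
  then show ?thesis using energy_deriv_le[of t] perturbation_small[of t] assms T'_le by (simp add: algebra_simps)
qed

text \<open>
  Off the traps \<open>energy' \<le> - decay \<cdot> dissipation / 2\<close> while \<open>\<bar>(potential \<circ> w)'\<bar> \<le> dissipation / 2\<close>,
  so both \<open>potential \<circ> w \<mp> energy / decay\<close> are monotone.
\<close>

lemma energy_decreases_off_traps: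
  assumes st: "s \<le> t" "t \<le> T'" and free: "\<And>x. s < x \<Longrightarrow> x < t \<Longrightarrow> x \<notin> traps"
  shows "\<bar>potential (w t) - potential (w s)\<bar> \<le> (energy s - energy t) / decay"
    and "energy t \<le> energy s"
proof -
  have inT: "x \<le> T" if "x \<le> t" for x using that st T'_le by simp
  have dPw: "((\<lambda>x. potential (w x)) has_real_derivative force (w x) * v x) (at x)" if "x \<le> T" for x
    using DERIV_chain2[OF potential_has_derivative[OF w_pos[OF that]] dw[OF that]] .
  have rate: "\<bar>force (w x) * v x\<bar> \<le> - energy_deriv x / decay" if "s < x" "x < t" for x
  proof -
    have "decay * \<bar>force (w x) * v x\<bar> \<le> decay * (dissipation x / 2)"
      using abs_force_v_le[of x] decay_pos by (intro mult_left_mono) auto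
    also have "\<dots> \<le> - energy_deriv x"
      using energy_deriv_off_traps[of x] free[OF that] that st by (simp add: algebra_simps)
    finally show ?thesis by (subst pos_le_divide_eq[OF decay_pos]) (simp add: mult.commute)
  qed
  have up: "((\<lambda>x. potential (w x) - energy x / decay) has_real_derivative
      force (w x) * v x - energy_deriv x / decay) (at x)"
    and down: "((\<lambda>x. potential (w x) + energy x / decay) has_real_derivative
      force (w x) * v x + energy_deriv x / decay) (at x)" if "x \<le> T" for x
    using dPw[OF that] energy_has_derivative[OF that] decay_pos by (auto intro!: derivative_eq_intros)
  have "potential (w s) - energy s / decay \<le> potential (w t) - energy t / decay"
  proof (rule DERIV_nonneg_imp_increasing_open[OF st(1)])
    show "continuous_on {s..t} (\<lambda>x. potential (w x) - energy x / decay)"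
      by (rule continuous_on_interval_if_derivative[OF up inT[OF order_refl]])
  next
    fix x assume x: "s < x" "x < t"
    show "\<exists>y. ((\<lambda>x. potential (w x) - energy x / decay) has_real_derivative y) (at x) \<and> 0 \<le> y"
      using up[of x] rate[OF x] inT[of x] x
      by (intro exI[of _ "force (w x) * v x - energy_deriv x / decay"]) (auto simp: abs_le_iff)
  qed
  moreover have "potential (w t) + energy t / decay \<le> potential (w s) + energy s / decay"
  proof (rule DERIV_nonpos_imp_decreasing_open[OF st(1)])
    show "continuous_on {s..t} (\<lambda>x. potential (w x) + energy x / decay)"
      by (rule continuous_on_interval_if_derivative[OF down inT[OF order_refl]])
  next
    fix x assume x: "s < x" "x < t"
    show "\<exists>y. ((\<lambda>x. potential (w x) + energy x / decay) has_real_derivative y) (at x) \<and> y \<le> 0"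
      using down[of x] rate[OF x] inT[of x] x
      by (intro exI[of _ "force (w x) * v x + energy_deriv x / decay"]) (auto simp: abs_le_iff)
  qed
  ultimately show "\<bar>potential (w t) - potential (w s)\<bar> \<le> (energy s - energy t) / decay"
    by (simp add: abs_le_iff diff_divide_distrib)
  then show "energy t \<le> energy s"
    using decay_pos order_trans[OF abs_ge_zero] by (fastforce simp: divide_nonneg_pos zero_le_divide_iff)
qed


text \<open>Without traps to the left of \<open>s\<close> the energy would grow linearly backwards in time, yet it is bounded.\<close>

lemma exists_trap_before:
  assumes s: "s \<le> T'"
  shows "\<exists>z\<in>traps. z \<le> s"
proof (rule ccontr)
  assume "\<not> (\<exists>z\<in>traps. z \<le> s)"
  then have off: "t \<notin> traps" if "t \<le> s" for t using that by blast
  have slope: "energy_deriv t \<le> - (decay / 2) * \<rho>" if t: "t \<le> s" for t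
  proof -
    have "\<rho> \<le> dissipation t"
      using dissipation_off_traps[of t] off[OF t] t s by (auto simp: traps_def trap0_iff trapg_def)
    then have "decay / 2 * \<rho> \<le> decay / 2 * dissipation t" using decay_pos by (intro mult_left_mono) auto
    then show ?thesis using energy_deriv_off_traps[of t] off[OF t] t s by linarith
  qed
  define L where "L = (4 * energy_max + 1) / (decay * \<rho>)"
  have "energy_max \<ge> 0" using abs_energy_le[of T] by simp
  then have L: "L > 0" unfolding L_def using decay_pos \<rho>_pos by simp
  have "(\<lambda>x. energy x + decay / 2 * \<rho> * x) s \<le> (\<lambda>x. energy x + decay / 2 * \<rho> * x) (s - L)"
  proof (rule DERIV_nonpos_imp_nonincreasing[of "s - L" s "\<lambda>x. energy x + decay / 2 * \<rho> * x"])
    fix x assume "s - L \<le> x" "x \<le> s"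
    then show "\<exists>y. ((\<lambda>x. energy x + decay / 2 * \<rho> * x) has_real_derivative y) (at x) \<and> y \<le> 0"
      using energy_has_derivative[of x] slope[of x] s T'_le
      by (intro exI[of _ "energy_deriv x + decay / 2 * \<rho>"]) (auto intro!: derivative_eq_intros)
  qed (use L in simp)
  then have "energy s + decay / 2 * \<rho> * L \<le> energy (s - L)" by (simp add: algebra_simps diff_divide_distrib add_divide_distrib)
  moreover have "decay / 2 * \<rho> * L = (4 * energy_max + 1) / 2"
    unfolding L_def using decay_pos \<rho>_pos by (simp add: field_simps)
  moreover have "\<bar>energy s\<bar> \<le> energy_max" "\<bar>energy (s - L)\<bar> \<le> energy_max"
    using abs_energy_le s T'_le L by auto
  ultimately show False by (simp add: abs_le_iff)
qed

lemma trap0_before_trapg: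
  assumes z: "z \<in> trapg" and z': "z' \<in> trap0"
  shows "z' < z"
proof (rule ccontr)
  assume "\<not> z' < z"
  then have "z < z'" using trap0_trapg_disjoint z z' by (cases "z = z'") auto
  then obtain a b where ab: "a \<in> trapg" "b \<in> trap0" "a < b" "\<And>s. a < s \<Longrightarrow> s < b \<Longrightarrow> s \<notin> trapg \<union> trap0"
    using closed_real_gap_between[OF closed_trapg closed_trap0 _ z z'] trap0_trapg_disjoint by blast
  have "energy b \<le> energy a"
    using energy_decreases_off_traps(2)[of a b] ab traps_le[of b] by (auto simp: traps_def)
  moreover have "\<bar>energy b\<bar> \<le> s0" using ab(2) energy_trap0 T'_le by (auto simp: trap0_iff)
  moreover have "\<bar>energy a - potential g\<bar> \<le> s1" using ab(1) energy_trapg T'_le by (auto simp: trapg_def)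
  ultimately show False using traps_separated by (simp add: abs_le_iff)
qed

lemma trap_gap_around:
  assumes "t \<notin> traps" "l \<in> traps" "l \<le> t" "u \<in> traps" "t \<le> u"
  obtains z1 z2 where "z1 \<in> traps" "z2 \<in> traps" "z1 < t" "t < z2" "z2 \<le> u"
    "\<And>\<tau>. z1 \<le> \<tau> \<Longrightarrow> \<tau> \<le> z2 \<Longrightarrow>
      energy z2 \<le> energy \<tau> \<and> \<bar>potential (w \<tau>) - potential (w z1)\<bar> \<le> (energy z1 - energy \<tau>) / decay"
proof -
  obtain z1 z2 where z: "z1 \<in> traps" "z2 \<in> traps" "z1 < t" "t < z2" "z2 \<le> u"
    and free: "\<And>s. z1 < s \<Longrightarrow> s < z2 \<Longrightarrow> s \<notin> traps"
    using closed_real_gap_around[OF closed_traps assms] by blast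
  have "z2 \<le> T'" using traps_le z by blast
  show ?thesis
  proof (rule that[OF z])
    fix \<tau> assume \<tau>: "z1 \<le> \<tau>" "\<tau> \<le> z2"
    have "energy z2 \<le> energy \<tau>"
      by (rule energy_decreases_off_traps(2)) (use \<tau> \<open>z2 \<le> T'\<close> free in auto)
    moreover have "\<bar>potential (w \<tau>) - potential (w z1)\<bar> \<le> (energy z1 - energy \<tau>) / decay"
      by (rule energy_decreases_off_traps(1)) (use \<tau> \<open>z2 \<le> T'\<close> free in auto)
    ultimately show "energy z2 \<le> energy \<tau> \<and>
      \<bar>potential (w \<tau>) - potential (w z1)\<bar> \<le> (energy z1 - energy \<tau>) / decay" ..
  qed
qed

lemma potential_bound_if_trapg_unbounded:
  assumes frequent: "\<And>s. \<exists>z\<in>trapg. z \<le> s"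
  shows "\<exists>s. \<forall>t\<le>s. potential (w t) \<le> potential g + s1 + 2 * s1 / decay"
proof -
  obtain zs where zs: "zs \<in> trapg" using frequent by blast
  have "\<bar>energy zs - potential g\<bar> \<le> s1" using zs energy_trapg T'_le by (auto simp: trapg_def)
  then have s1_c: "0 \<le> 2 * s1 / decay" using decay_pos by simp
  have in_trapg: "z \<in> trapg" if "z \<in> traps" for z
    using trap0_before_trapg that frequent[of z] unfolding traps_def by force
  have "potential (w t) \<le> potential g + s1 + 2 * s1 / decay" if t: "t \<le> zs" for t
  proof (cases "t \<in> traps")
    case True
    then have "potential (w t) \<le> potential g + s1"
      using in_trapg[OF True] energy_trapg T'_le by (auto simp: trapg_def)
    then show ?thesis using s1_c by linarith
  next
    case False
    obtain zl where zl: "zl \<in> trapg" "zl \<le> t" using frequent by blast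
    obtain z1 z2 where z: "z1 \<in> traps" "z2 \<in> traps" "z1 < t" "t < z2"
      and bounds: "energy z2 \<le> energy t" "\<bar>potential (w t) - potential (w z1)\<bar> \<le> (energy z1 - energy t) / decay"
      by (rule trap_gap_around[OF False, of zl zs]) (use t zs zl in \<open>auto simp: traps_def\<close>)
    have "\<bar>energy z1 - potential g\<bar> \<le> s1" "potential (w z1) \<le> potential g + s1"
      "\<bar>energy z2 - potential g\<bar> \<le> s1"
      using in_trapg[OF z(1)] in_trapg[OF z(2)] energy_trapg T'_le unfolding trapg_def by auto
    then have "energy z1 - energy t \<le> 2 * s1" "potential (w z1) \<le> potential g + s1"
      using bounds(1) by (auto simp: abs_le_iff)
    moreover have "(energy z1 - energy t) / decay \<le> 2 * s1 / decay"
      using calculation(1) decay_pos by (intro divide_right_mono) auto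
    ultimately show ?thesis using bounds(2) by (simp add: abs_le_iff)
  qed
  then show ?thesis by blast
qed

lemma potential_bound_if_trapg_bounded:
  assumes bounded: "\<exists>s. \<forall>z\<in>trapg. s < z" and frequent: "\<And>s. \<exists>t\<le>s. b < w t" and "\<eta> < b"
  shows "- s0 - 2 * s0 / decay \<le> potential b"
proof -
  obtain s where s: "\<forall>z\<in>trapg. s < z" using bounded by blast
  obtain zs where zs: "zs \<in> traps" "zs \<le> min s T'" using exists_trap_before[of "min s T'"] by auto
  obtain t where t: "t \<le> zs" "b < w t" using frequent by blast
  have in_trap0: "z \<in> trap0" if "z \<in> traps" "z \<le> zs" for z
    using that s zs unfolding traps_def by force
  have "t \<notin> traps" using in_trap0[of t] t \<open>\<eta> < b\<close> by (auto simp: trap0_iff)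
  moreover obtain zl where "zl \<in> traps" "zl \<le> t" using exists_trap_before[of t] t zs by auto
  ultimately obtain z1 z2 where z: "z1 \<in> traps" "z2 \<in> traps" "z1 < t" "t < z2" "z2 \<le> zs"
    and bounds: "\<And>\<tau>. z1 \<le> \<tau> \<Longrightarrow> \<tau> \<le> z2 \<Longrightarrow>
      energy z2 \<le> energy \<tau> \<and> \<bar>potential (w \<tau>) - potential (w z1)\<bar> \<le> (energy z1 - energy \<tau>) / decay"
    using trap_gap_around[OF _ _ _ zs(1) t(1)] by metis
  have z1: "\<bar>energy z1\<bar> \<le> s0" "- s0 \<le> potential (w z1)" "w z1 \<le> \<eta>"
    using in_trap0[OF z(1)] z t energy_trap0 T'_le by (auto simp: trap0_iff)
  have "\<bar>energy z2\<bar> \<le> s0" using in_trap0[OF z(2,5)] energy_trap0 T'_le by (auto simp: trap0_iff)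
  have "\<exists>x\<ge>z1. x \<le> t \<and> w x = b"
    using z1(3) \<open>\<eta> < b\<close> t z zs T'_le
    by (intro IVT) (auto intro: DERIV_isCont[OF dw])
  then obtain x where x: "z1 \<le> x" "x \<le> t" "w x = b" by blast
  then have "energy z2 \<le> energy x" "\<bar>potential b - potential (w z1)\<bar> \<le> (energy z1 - energy x) / decay"
    using bounds[of x] z by auto
  moreover have "energy z1 - energy z2 \<le> 2 * s0" using z1 \<open>\<bar>energy z2\<bar> \<le> s0\<close> by (simp add: abs_le_iff)
  ultimately have "(energy z1 - energy x) / decay \<le> 2 * s0 / decay"
    using decay_pos by (intro divide_right_mono) auto
  with \<open>\<bar>potential b - potential (w z1)\<bar> \<le> _\<close> have "potential (w z1) - 2 * s0 / decay \<le> potential b"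
    by (simp add: abs_le_iff)
  then show ?thesis using z1(2) by linarith
qed

end

section \<open>Convergence to the equilibrium\<close>

context damped_oscillator
begin

lemma dissipation_ge_off_traps:
  assumes \<eta>: "0 < \<eta>" "2 * \<eta> < g"
    and off: "\<not> (\<bar>v t\<bar> \<le> \<eta> \<and> w t \<le> \<eta>)" "\<not> (\<bar>v t\<bar> \<le> \<eta> \<and> \<bar>w t - g\<bar> \<le> \<eta>)"
  shows "min (\<eta>\<^sup>2) ((force_gap \<eta>)\<^sup>2) \<le> dissipation t"
proof (cases "\<bar>v t\<bar> \<le> \<eta>")
  case False
  then have "\<eta>\<^sup>2 \<le> \<bar>v t\<bar>\<^sup>2" using \<eta> power_mono[of \<eta> "\<bar>v t\<bar>" 2] by simp
  then have "\<eta>\<^sup>2 \<le> (v t)\<^sup>2" by simp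
  then have "\<eta>\<^sup>2 \<le> dissipation t"
    unfolding dissipation_def using zero_le_power2[of "force (w t)"] by linarith
  then show ?thesis by (rule min.coboundedI1)
next
  case True
  then have "force_gap \<eta> \<le> \<bar>force (w t)\<bar>" using off \<eta> force_gap_le[of \<eta> "w t"] by auto
  then have "(force_gap \<eta>)\<^sup>2 \<le> \<bar>force (w t)\<bar>\<^sup>2"
    using force_gap_pos[OF \<eta>] power_mono by (metis less_imp_le)
  then have "(force_gap \<eta>)\<^sup>2 \<le> (force (w t))\<^sup>2" by simp
  then have "(force_gap \<eta>)\<^sup>2 \<le> dissipation t"
    unfolding dissipation_def using zero_le_power2[of "v t"] by linarith
  then show ?thesis by (rule min.coboundedI2)
qed

lemma energy_near_zero:
  assumes t: "t \<le> T" and small: "\<bar>v t\<bar> \<le> \<eta>" "w t \<le> \<eta>" "\<eta> \<le> 1"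
  shows "\<bar>energy t\<bar> \<le> (1 + (Ap + k0) * (1 + \<delta>)) * \<eta>"
    and "- ((1 + (Ap + k0) * (1 + \<delta>)) * \<eta>) \<le> potential (w t)"
proof -
  have near: "\<bar>potential (w t)\<bar> \<le> (Ap + k0) * \<eta>" "\<bar>force (w t)\<bar> \<le> (Ap + k0) * \<eta>"
    using near_zero[OF w_pos[OF t] small(2,3)] by auto
  have "0 \<le> \<eta>" using small(1) by linarith
  then have \<eta>: "0 \<le> \<eta>" "\<eta>\<^sup>2 \<le> \<eta>" using small(3) by (auto simp: power2_eq_square mult_left_le_one_le)
  have "(v t)\<^sup>2 \<le> \<eta>\<^sup>2" using small(1) by (metis abs_ge_zero power2_abs power_mono)
  moreover have "\<bar>\<delta> * v t * force (w t)\<bar> \<le> \<delta> * (Ap + k0) * \<eta>"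
  proof -
    have "\<bar>v t * force (w t)\<bar> \<le> \<eta> * ((Ap + k0) * \<eta>)"
      unfolding abs_mult using small near by (intro mult_mono) auto
    also have "\<dots> = (Ap + k0) * \<eta>\<^sup>2" by (simp add: power2_eq_square)
    also have "\<dots> \<le> (Ap + k0) * \<eta>" using \<eta> Ap_pos k0_pos by (intro mult_left_mono) auto
    finally show ?thesis using \<delta>_pos by (simp add: abs_mult mult.assoc mult_left_mono)
  qed
  moreover have "(1 + (Ap + k0) * (1 + \<delta>)) * \<eta> = \<eta> + (Ap + k0) * \<eta> + \<delta> * (Ap + k0) * \<eta>"
    by (simp add: algebra_simps)
  ultimately show "\<bar>energy t\<bar> \<le> (1 + (Ap + k0) * (1 + \<delta>)) * \<eta>"
    using abs_energy_le_sum[of t] near \<eta> by linarith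
  have "(Ap + k0) * \<eta> \<le> (1 + (Ap + k0) * (1 + \<delta>)) * \<eta>"
    using \<eta> Ap_pos k0_pos \<delta>_pos by (intro mult_right_mono) (auto simp: algebra_simps)
  then show "- ((1 + (Ap + k0) * (1 + \<delta>)) * \<eta>) \<le> potential (w t)"
    using near by (simp add: abs_le_iff)
qed

lemma energy_near_equilibrium:
  assumes small: "\<bar>v t\<bar> \<le> \<eta>" and near: "\<bar>potential (w t) - potential g\<bar> \<le> \<sigma>" "\<bar>force (w t)\<bar> \<le> 1"
  shows "\<bar>energy t - potential g\<bar> \<le> \<sigma> + \<eta>\<^sup>2 / 2 + \<delta> * \<eta>"
    and "potential (w t) \<le> potential g + \<sigma> + \<eta>\<^sup>2 / 2 + \<delta> * \<eta>"
proof -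
  have "(v t)\<^sup>2 \<le> \<eta>\<^sup>2" using small by (metis abs_ge_zero power2_abs power_mono)
  moreover have "\<bar>\<delta> * v t * force (w t)\<bar> \<le> \<delta> * \<eta>"
  proof -
    have "\<bar>v t * force (w t)\<bar> \<le> \<eta>"
      using mult_mono[OF small near(2)] small by (simp add: abs_mult)
    then show ?thesis using \<delta>_pos by (simp add: abs_mult mult.assoc mult_left_mono)
  qed
  moreover have "energy t - potential g
      = (v t)\<^sup>2 / 2 + (potential (w t) - potential g) + \<delta> * v t * force (w t)"
    unfolding energy_def by simp
  then have "\<bar>energy t - potential g\<bar>
      \<le> \<bar>(v t)\<^sup>2 / 2\<bar> + \<bar>potential (w t) - potential g\<bar> + \<bar>\<delta> * v t * force (w t)\<bar>"
    using abs_triangle_ineq[of "(v t)\<^sup>2 / 2 + (potential (w t) - potential g)" "\<delta> * v t * force (w t)"]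
      abs_triangle_ineq[of "(v t)\<^sup>2 / 2" "potential (w t) - potential g"]
    by linarith
  ultimately show "\<bar>energy t - potential g\<bar> \<le> \<sigma> + \<eta>\<^sup>2 / 2 + \<delta> * \<eta>"
    using near(1) by simp
  have "0 \<le> \<eta>\<^sup>2 / 2 + \<delta> * \<eta>" using small \<delta>_pos by simp
  then show "potential (w t) \<le> potential g + \<sigma> + \<eta>\<^sup>2 / 2 + \<delta> * \<eta>"
    using near(1) by (simp add: abs_le_iff)
qed


lemma exists_trap_configuration:
  assumes \<tau>: "0 < \<tau>" "2 * \<tau> \<le> - potential g" and "0 < \<eta>0"
  obtains \<eta> \<rho> T' s0 s1 where "oscillator_traps a k0 p g Ap M B T w v v' e \<eta> \<rho> T' s0 s1"
    "\<eta> < \<eta>0" "s0 < \<tau> / 2" "s1 < 2 * \<tau> / 3"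
proof -
  obtain \<eta>g where \<eta>g: "\<eta>g > 0"
    "\<And>x. \<bar>x - g\<bar> \<le> \<eta>g \<Longrightarrow> \<bar>potential x - potential g\<bar> \<le> \<tau> / 3 \<and> \<bar>force x\<bar> \<le> 1"
    using near_equilibrium[of "\<tau> / 3"] \<tau> by auto
  define C where "C = 1 + (Ap + k0) * (1 + \<delta>)"
  have C: "C > 0" unfolding C_def using Ap_pos k0_pos \<delta>_pos by (simp add: add_pos_nonneg)
  define m where "m = Min {1, \<eta>0, g / 4, \<eta>g, \<tau> / (3 * (1 + \<delta>)), \<tau> / (2 * C)}"
  have "0 < m" unfolding m_def using \<open>0 < \<eta>0\<close> g_pos \<eta>g \<tau> \<delta>_pos C by simp
  moreover have "m \<le> 1" "m \<le> \<eta>0" "m \<le> g / 4" "m \<le> \<eta>g"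
    "m \<le> \<tau> / (3 * (1 + \<delta>))" "m \<le> \<tau> / (2 * C)"
    unfolding m_def by (intro Min_le; simp)+
  ultimately have m: "0 < m" "m \<le> 1" "m \<le> \<eta>0" "m \<le> g / 4" "m \<le> \<eta>g"
    "m \<le> \<tau> / (3 * (1 + \<delta>))" "m \<le> \<tau> / (2 * C)" by auto
  define \<eta> where "\<eta> = m / 2"
  have \<eta>: "0 < \<eta>" "\<eta> < 1" "\<eta> < \<eta>0" "\<eta> < g / 4" "\<eta> < \<eta>g"
    "\<eta> < \<tau> / (3 * (1 + \<delta>))" "\<eta> < \<tau> / (2 * C)"
    unfolding \<eta>_def using m by linarith+
  define s0 where "s0 = C * \<eta>"
  define s1 where "s1 = \<tau> / 3 + \<eta>\<^sup>2 / 2 + \<delta> * \<eta>"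
  have "C * \<eta> < C * (\<tau> / (2 * C))" using \<eta> C by (intro mult_strict_left_mono) auto
  then have s0: "s0 < \<tau> / 2" unfolding s0_def using C by simp
  have "\<eta>\<^sup>2 / 2 + \<delta> * \<eta> \<le> \<eta> * (1 + \<delta>)"
    using \<eta> by (simp add: power2_eq_square algebra_simps mult_left_le_one_le)
  also have "\<dots> < \<tau> / (3 * (1 + \<delta>)) * (1 + \<delta>)" using \<eta> \<delta>_pos by (intro mult_strict_right_mono) auto
  also have "\<dots> = \<tau> / 3" using \<delta>_pos by (simp add: field_simps)
  finally have s1: "s1 < 2 * \<tau> / 3" unfolding s1_def by simp
  define \<rho> where "\<rho> = min (\<eta>\<^sup>2) ((force_gap \<eta>)\<^sup>2)"
  have \<rho>: "\<rho> > 0" unfolding \<rho>_def using \<eta> force_gap_pos[of \<eta>] by simp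
  have "((\<lambda>t. gain * (e t)\<^sup>2) \<longlongrightarrow> gain * 0\<^sup>2) at_bot"
    by (intro tendsto_intros e_tendsto)
  then have "eventually (\<lambda>t. gain * (e t)\<^sup>2 < decay / 2 * \<rho>) at_bot"
    using decay_pos \<rho> by (intro order_tendstoD(2)) auto
  then obtain N where N: "\<And>t. t \<le> N \<Longrightarrow> gain * (e t)\<^sup>2 < decay / 2 * \<rho>"
    by (auto simp: eventually_at_bot_linorder)
  have "oscillator_traps a k0 p g Ap M B T w v v' e \<eta> \<rho> (min N T) s0 s1"
  proof (unfold_locales)
    show "\<rho> \<le> dissipation t"
      if "\<not> (\<bar>v t\<bar> \<le> \<eta> \<and> w t \<le> \<eta>)" "\<not> (\<bar>v t\<bar> \<le> \<eta> \<and> \<bar>w t - g\<bar> \<le> \<eta>)" for t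
      unfolding \<rho>_def using dissipation_ge_off_traps[OF _ _ that] \<eta> by auto
    show "\<bar>energy t\<bar> \<le> s0 \<and> - s0 \<le> potential (w t)" if "t \<le> T" "\<bar>v t\<bar> \<le> \<eta>" "w t \<le> \<eta>" for t
      using energy_near_zero[OF that] \<eta> unfolding s0_def C_def by auto
    show "\<bar>energy t - potential g\<bar> \<le> s1 \<and> potential (w t) \<le> potential g + s1"
      if "t \<le> T" "\<bar>v t\<bar> \<le> \<eta>" "\<bar>w t - g\<bar> \<le> \<eta>" for t
      using energy_near_equilibrium[of t \<eta> "\<tau> / 3"] \<eta>g(2)[of "w t"] that \<eta> unfolding s1_def by auto
  qed (use \<eta> \<rho> s0 s1 \<tau> N in \<open>auto simp: less_imp_le\<close>)
  then show ?thesis using that \<eta> s0 s1 by blast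
qed

lemma eventually_near_equilibrium:
  assumes frequent: "\<And>s. \<exists>t\<le>s. b < w t" and b: "0 < b" "b \<le> g" and r: "0 < r" "r < g"
  shows "\<exists>s. \<forall>t\<le>s. \<bar>w t - g\<bar> < r"
proof -
  obtain \<Delta> where \<Delta>: "\<Delta> > 0" and near: "\<And>x. 0 < x \<Longrightarrow> potential x < potential g + \<Delta> \<Longrightarrow> \<bar>x - g\<bar> < r"
    using potential_gap_near_equilibrium[OF r] by blast
  define \<kappa> where "\<kappa> = Min {- potential g, - potential b, \<Delta>}"
  have \<kappa>: "0 < \<kappa>" "\<kappa> \<le> - potential g" "\<kappa> \<le> - potential b" "\<kappa> \<le> \<Delta>"
    unfolding \<kappa>_def using potential_neg[OF g_pos] potential_neg[OF b] \<Delta> by auto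
  have c_pos: "0 < 1 + 2 / decay" using decay_pos by (simp add: add_pos_nonneg)
  define \<tau> where "\<tau> = \<kappa> / (2 * (1 + 2 / decay))"
  have \<tau>: "0 < \<tau>" "\<tau> * (1 + 2 / decay) = \<kappa> / 2"
    unfolding \<tau>_def using \<kappa> c_pos by (auto simp: field_simps)
  have "\<tau> \<le> \<tau> * (1 + 2 / decay)" using \<tau> decay_pos by simp
  then have "2 * \<tau> \<le> - potential g" using \<tau> \<kappa> by linarith
  then obtain \<eta> \<rho> T' s0 s1 where traps: "oscillator_traps a k0 p g Ap M B T w v v' e \<eta> \<rho> T' s0 s1"
    and "\<eta> < b" and s: "s0 < \<tau> / 2" "s1 < 2 * \<tau> / 3"
    by (rule exists_trap_configuration[OF \<tau>(1) _ b(1)])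
  interpret oscillator_traps a k0 p g Ap M B T w v v' e \<eta> \<rho> T' s0 s1 by (rule traps)
  show ?thesis
  proof (cases "\<forall>s. \<exists>z\<in>trapg. z \<le> s")
    case True
    have "s1 + 2 * s1 / decay = s1 * (1 + 2 / decay)" by (simp add: field_simps)
    also have "\<dots> < \<tau> * (1 + 2 / decay)" using s \<tau> c_pos by (intro mult_strict_right_mono) auto
    also have "\<dots> \<le> \<Delta>" using \<tau> \<kappa> by linarith
    finally have level: "s1 + 2 * s1 / decay < \<Delta>" .
    obtain s where "\<And>t. t \<le> s \<Longrightarrow> potential (w t) \<le> potential g + s1 + 2 * s1 / decay"
      using potential_bound_if_trapg_unbounded True by blast
    then have "\<bar>w t - g\<bar> < r" if "t \<le> min s T" for t
      using near[of "w t"] w_pos[of t] level that by force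
    then show ?thesis by blast
  next
    case False
    then have "\<exists>s. \<forall>z\<in>trapg. s < z" by (auto simp: not_le)
    from potential_bound_if_trapg_bounded[OF this frequent \<open>\<eta> < b\<close>]
    have "- s0 - 2 * s0 / decay \<le> potential b" .
    moreover have "s0 + 2 * s0 / decay = s0 * (1 + 2 / decay)" by (simp add: field_simps)
    moreover have "s0 * (1 + 2 / decay) < \<tau> * (1 + 2 / decay)"
      using s \<tau> c_pos by (intro mult_strict_right_mono) auto
    ultimately show ?thesis using \<tau> \<kappa> by linarith
  qed
qed

theorem tendsto_equilibrium:
  assumes frequent: "\<And>s. \<exists>t\<le>s. b < w t" and "0 < b"
  shows "(w \<longlongrightarrow> g) at_bot"
proof (rule tendstoI)
  fix r :: real assume "r > 0"
  have "\<exists>s. \<forall>t\<le>s. \<bar>w t - g\<bar> < min r (g / 2)"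
  proof (rule eventually_near_equilibrium)
    show "\<exists>t\<le>s. min b g < w t" for s using frequent[of s] by (auto simp: min_less_iff_disj)
  qed (use \<open>0 < b\<close> \<open>r > 0\<close> g_pos in auto)
  then obtain s where "\<And>t. t \<le> s \<Longrightarrow> \<bar>w t - g\<bar> < min r (g / 2)" by blast
  then show "eventually (\<lambda>t. dist (w t) g < r) at_bot"
    unfolding eventually_at_bot_linorder dist_real_def by force
qed

end

section \<open>The transformed Emden--Fowler equation\<close>

lemma eventually_less_of_Limsup_finite:
  fixes w :: "real \<Rightarrow> real"
  assumes "Limsup at_bot (\<lambda>t. ereal (w t)) < \<infinity>"
  obtains M where "eventually (\<lambda>t. w t < M) at_bot"
proof -
  obtain n :: nat where "Limsup at_bot (\<lambda>t. ereal (w t)) < ereal (real n)"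
    using assms less_PInf_Ex_of_nat by auto
  then show ?thesis using that Limsup_lessD by fastforce
qed

lemma frequently_greater_of_Limsup_pos:
  fixes w :: "real \<Rightarrow> real"
  assumes "0 < Limsup at_bot (\<lambda>t. ereal (w t))"
  obtains b where "0 < b" "\<forall>s. \<exists>t\<le>s. b < w t"
proof -
  obtain b where b: "0 < ereal b" "ereal b < Limsup at_bot (\<lambda>t. ereal (w t))"
    using ereal_dense2[OF assms] by auto
  have "\<not> eventually (\<lambda>t. ereal (w t) \<le> ereal b) at_bot"
    using Limsup_bounded[of "\<lambda>t. ereal (w t)" "ereal b" at_bot] b(2) by auto
  then have "\<exists>t\<le>s. b < w t" for s
    unfolding eventually_at_bot_linorder by (auto simp: not_le)
  then show ?thesis using that b(1) by auto
qed

lemma tendsto_perturbation_0: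
  fixes w L e :: "real \<Rightarrow> real"
  assumes bounded: "eventually (\<lambda>t. 0 < w t \<and> w t < M) at_bot" and p: "p > 0"
    and L: "(L \<longlongrightarrow> k0) at_bot" and e: "(e \<longlongrightarrow> 0) at_bot"
  shows "((\<lambda>t. (L t - k0) * w t powr p + e t) \<longlongrightarrow> 0) at_bot"
proof (rule Lim_null_comparison)
  show "eventually (\<lambda>t. norm ((L t - k0) * w t powr p + e t) \<le> \<bar>L t - k0\<bar> * M powr p + \<bar>e t\<bar>) at_bot"
    using bounded
  proof eventually_elim
    case (elim t)
    then have "w t powr p \<le> M powr p" using p by (intro powr_mono2) auto
    then have "\<bar>(L t - k0) * w t powr p\<bar> \<le> \<bar>L t - k0\<bar> * M powr p" by (simp add: abs_mult mult_left_mono)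
    then show ?case by simp
  qed
  have "((\<lambda>t. \<bar>L t - k0\<bar> * M powr p + \<bar>e t\<bar>) \<longlongrightarrow> \<bar>k0 - k0\<bar> * M powr p + \<bar>0\<bar>) at_bot"
    by (intro tendsto_intros L e)
  then show "((\<lambda>t. \<bar>L t - k0\<bar> * M powr p + \<bar>e t\<bar>) \<longlongrightarrow> 0) at_bot" by simp
qed

theorem tendsto_equilibrium_of_perturbed_equation:
  fixes w w' w'' L e :: "real \<Rightarrow> real" and a k0 p g t1 :: real
  assumes a: "a > 0" and k0: "k0 > 0" and p: "p > 1" and g: "g > 0"
    and w1: "\<And>t. t < t1 \<Longrightarrow> (w has_real_derivative w' t) (at t)"
    and w2: "\<And>t. t < t1 \<Longrightarrow> (w' has_real_derivative w'' t) (at t)"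
    and w_pos: "\<And>t. t < t1 \<Longrightarrow> w t > 0"
    and eq: "\<And>t. t < t1 \<Longrightarrow> w'' t + a * w' t - k0 * g powr (p - 1) * w t + L t * w t powr p + e t = 0"
    and L: "(L \<longlongrightarrow> k0) at_bot" and e: "(e \<longlongrightarrow> 0) at_bot"
    and ls_pos: "0 < Limsup at_bot (\<lambda>t. ereal (w t))"
    and ls_fin: "Limsup at_bot (\<lambda>t. ereal (w t)) < \<infinity>"
  shows "(w \<longlongrightarrow> g) at_bot"
proof -
  define Ap where "Ap = k0 * g powr (p - 1)"
  obtain M where M: "eventually (\<lambda>t. w t < M) at_bot"
    using eventually_less_of_Limsup_finite[OF ls_fin] .
  obtain b where b: "0 < b" "\<forall>s. \<exists>t\<le>s. b < w t"
    by (rule frequently_greater_of_Limsup_pos[OF ls_pos])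
  have "eventually (\<lambda>t. t < t1) at_bot"
    unfolding eventually_at_bot_linorder by (auto intro: exI[of _ "t1 - 1"])
  with M have bounded: "eventually (\<lambda>t. 0 < w t \<and> w t < M) at_bot"
    by eventually_elim (use w_pos in auto)
  define e' where "e' t = (L t - k0) * w t powr p + e t" for t
  have e': "(e' \<longlongrightarrow> 0) at_bot"
    unfolding e'_def using tendsto_perturbation_0[OF bounded _ L e] p by simp
  obtain T0 where T0: "\<And>t. t \<le> T0 \<Longrightarrow> w t < M \<and> \<bar>e' t\<bar> < 1"
    using eventually_conj[OF M order_tendstoD(2)[OF tendsto_rabs[OF e'], of 1]]
    unfolding eventually_at_bot_linorder by auto
  define T where "T = min T0 (t1 - 1)"
  have left_of_T: "t < t1" "0 < w t" "w t < M" "\<bar>e' t\<bar> < 1" if "t \<le> T" for t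
    using that T0[of t] w_pos[of t] unfolding T_def by auto
  have equation: "w'' t = - a * w' t + Ap * w t - k0 * w t powr p - e' t" if "t \<le> T" for t
    using eq[OF left_of_T(1)[OF that]] unfolding e'_def Ap_def by (simp add: algebra_simps)
  define H where "H = Ap * M + k0 * M powr p + 1"
  have damped: "\<bar>w'' t + a * w' t\<bar> \<le> H" if t: "t \<le> T" for t
  proof -
    have "Ap * w t \<le> Ap * M" "k0 * w t powr p \<le> k0 * M powr p" "0 \<le> Ap * w t" "0 \<le> k0 * w t powr p"
      using left_of_T[OF t] k0 g p by (auto simp: Ap_def intro!: mult_left_mono powr_mono2)
    moreover have "- 1 < e' t" "e' t < 1" using left_of_T(4)[OF t] by auto
    ultimately show ?thesis using equation[OF t] unfolding H_def by (simp add: abs_le_iff)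
  qed
  have dw: "(w has_real_derivative w' t) (at t)" and dw': "(w' has_real_derivative w'' t) (at t)"
    if "t \<le> T" for t
    using w1 w2 left_of_T(1)[OF that] by blast+
  have w_bounds: "0 \<le> w t \<and> w t \<le> M" if "t \<le> T" for t using left_of_T(2,3)[OF that] by auto
  have "\<bar>w' t\<bar> \<le> H / a + 1" if "t \<le> T" for t
    by (rule damped_derivative_bound[OF a dw dw' damped w_bounds that])
  then interpret damped_oscillator a k0 p g Ap M "H / a + 1" T w w' w'' e'
  proof unfold_locales
    show "Ap = k0 * g powr (p - 1)" by (rule Ap_def)
    show "w t \<le> M" if "t \<le> T" for t using left_of_T(3)[OF that] by simp
  qed (use a k0 p g dw dw' equation left_of_T(2) e' in auto)
  show ?thesis by (rule tendsto_equilibrium[of b]) (use b in auto)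
qed

lemma supercritical_exponent:
  assumes N: "N \<ge> 3" and alpha: "\<alpha> > -2" and p: "p > pS N \<alpha>" and k0: "k0 > 0"
  shows "p > 1" and "theta \<alpha> p > 0" and "acoef N \<alpha> p > 0" and "gammacoef k0 N \<alpha> p > 0"
    and "Acoef N \<alpha> p powr (p - 1) = k0 * gammacoef k0 N \<alpha> p powr (p - 1)"
proof -
  have N2: "N - 2 > 0" using N by simp
  then have "p * (N - 2) > N + 2 + 2 * \<alpha>" using p by (simp add: pS_def divide_less_eq)
  then have "2 * (2 + \<alpha>) < (p - 1) * (N - 2)" by (simp add: algebra_simps)
  moreover have "(N + 2 + 2 * \<alpha>) / (N - 2) > 1" using N2 alpha by (simp add: less_divide_eq)
  ultimately show p1: "p > 1" using p by (simp add: pS_def)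
  then show th: "theta \<alpha> p > 0" using alpha by (simp add: theta_def)
  have "2 * (2 + \<alpha>) / (p - 1) < N - 2"
    using \<open>2 * (2 + \<alpha>) < (p - 1) * (N - 2)\<close> p1 by (simp add: divide_less_eq mult.commute)
  then have th_lt: "2 * theta \<alpha> p < N - 2" by (simp add: theta_def)
  then show "acoef N \<alpha> p > 0" by (simp add: acoef_def)
  have thc: "theta \<alpha> p * ccoef N \<alpha> p > 0" using th th_lt by (simp add: ccoef_def)
  then show "gammacoef k0 N \<alpha> p > 0" using k0 by (auto simp: gammacoef_def Acoef_def intro!: mult_pos_pos)
  have "Acoef N \<alpha> p powr (p - 1) = theta \<alpha> p * ccoef N \<alpha> p"
    using p1 thc by (simp add: Acoef_def powr_powr)
  moreover have "gammacoef k0 N \<alpha> p powr (p - 1)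
      = (k0 powr (- 1 / (p - 1))) powr (p - 1) * Acoef N \<alpha> p powr (p - 1)"
    unfolding gammacoef_def using k0 by (simp add: powr_mult Acoef_def)
  moreover have "(k0 powr (- 1 / (p - 1))) powr (p - 1) = k0 powr (- 1)"
    using p1 by (simp add: powr_powr)
  ultimately show "Acoef N \<alpha> p powr (p - 1) = k0 * gammacoef k0 N \<alpha> p powr (p - 1)"
    using k0 by (simp add: powr_minus)
qed

lemma Lfun_tendsto:
  assumes "((\<lambda>r. K r / r powr \<alpha>) \<longlongrightarrow> k0) (at_right 0)"
  shows "(Lfun K \<alpha> \<longlongrightarrow> k0) at_bot"
proof -
  have "((\<lambda>t. K (exp t) / exp t powr \<alpha>) \<longlongrightarrow> k0) at_bot"
    using filterlim_compose[OF assms filterlim_exp_at_bot_at_right_0] by simp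
  moreover have "K (exp t) / exp t powr \<alpha> = Lfun K \<alpha> t" for t
    unfolding Lfun_def by (simp add: powr_def exp_minus field_simps)
  ultimately show ?thesis by simp
qed

lemma gfun_tendsto_0:
  assumes f: "f \<in> O[at_right 0](\<lambda>r. r powr \<nu>)" and pos: "2 + theta \<alpha> p + \<nu> > 0"
  shows "(gfun f \<alpha> p \<longlongrightarrow> 0) at_bot"
proof -
  obtain C where C: "eventually (\<lambda>r. norm (f r) \<le> C * norm (r powr \<nu>)) (at_right 0)"
    using f by (elim landau_o.bigE)
  have "eventually (\<lambda>t. norm (f (exp t)) \<le> C * norm (exp t powr \<nu>)) at_bot"
    using filterlim_iff[THEN iffD1, OF filterlim_exp_at_bot_at_right_0, rule_format, OF C] .
  then have "eventually (\<lambda>t. norm (gfun f \<alpha> p t) \<le> C * exp ((2 + theta \<alpha> p + \<nu>) * t)) at_bot"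
  proof eventually_elim
    case (elim t)
    have "norm (gfun f \<alpha> p t) = exp ((2 + theta \<alpha> p) * t) * norm (f (exp t))"
      unfolding gfun_def by (simp add: abs_mult)
    also have "\<dots> \<le> exp ((2 + theta \<alpha> p) * t) * (C * norm (exp t powr \<nu>))"
      using elim by (intro mult_left_mono) auto
    also have "\<dots> = C * exp ((2 + theta \<alpha> p + \<nu>) * t)"
      by (simp add: powr_def algebra_simps exp_add[symmetric])
    finally show ?case .
  qed
  moreover have "((\<lambda>t. C * exp ((2 + theta \<alpha> p + \<nu>) * t)) \<longlongrightarrow> C * 0) at_bot"
    by (intro tendsto_intros tendsto_exp_mult_at_bot pos)
  ultimately show ?thesis by (auto intro: Lim_null_comparison)
qed

theorem lemma2p2:
  fixes N :: nat and \<mu> \<alpha> k0 \<nu> p t1 :: real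
    and K f w w' w'' :: "real \<Rightarrow> real"
  assumes N: "N \<ge> 3" and mu: "\<mu> \<ge> 0"
    and K_cont: "continuous_on {0<..} K" and K_pos: "\<And>r. r > 0 \<Longrightarrow> K r > 0"
    and alpha: "\<alpha> > -2" and k0: "k0 > 0"
    and K_asym: "((\<lambda>r. K r / r powr \<alpha>) \<longlongrightarrow> k0) (at_right 0)"
    and f_cont: "continuous_on {0<..} f" and f_nonneg: "\<And>r. r > 0 \<Longrightarrow> f r \<ge> 0"
    and f_nonzero: "\<exists>r>0. f r \<noteq> 0"
    and nu: "\<nu> > -2" and f_asym: "f \<in> O[at_right 0](\<lambda>r. r powr \<nu>)"
    and p: "p > pS (real N) \<alpha>"
    and w1: "\<And>t. t < t1 \<Longrightarrow> (w has_real_derivative w' t) (at t)"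
    and w2: "\<And>t. t < t1 \<Longrightarrow> (w' has_real_derivative w'' t) (at t)"
    and w2_cont: "continuous_on {..<t1} w''"
    and w_pos: "\<And>t. t < t1 \<Longrightarrow> w t > 0"
    and eq: "\<And>t. t < t1 \<Longrightarrow>
       w'' t + acoef (real N) \<alpha> p * w' t - Acoef (real N) \<alpha> p powr (p - 1) * w t
       + Lfun K \<alpha> t * w t powr p + \<mu> * gfun f \<alpha> p t = 0"
    and ls_pos: "0 < Limsup at_bot (\<lambda>t. ereal (w t))"
    and ls_fin: "Limsup at_bot (\<lambda>t. ereal (w t)) < \<infinity>"
  shows "(w \<longlongrightarrow> gammacoef k0 (real N) \<alpha> p) at_bot"
proof -
  have N': "real N \<ge> 3" using N by simp
  note exponent = supercritical_exponent[OF N' alpha p k0]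
  have "(gfun f \<alpha> p \<longlongrightarrow> 0) at_bot"
    using gfun_tendsto_0[OF f_asym] exponent(2) nu by simp
  then have e: "((\<lambda>t. \<mu> * gfun f \<alpha> p t) \<longlongrightarrow> 0) at_bot"
    using tendsto_mult_right_zero by blast
  have eq': "w'' t + acoef N \<alpha> p * w' t - k0 * gammacoef k0 N \<alpha> p powr (p - 1) * w t
      + Lfun K \<alpha> t * w t powr p + \<mu> * gfun f \<alpha> p t = 0" if "t < t1" for t
    using eq[OF that] exponent(5) by simp
  show ?thesis
    by (rule tendsto_equilibrium_of_perturbed_equation[OF exponent(3) k0 exponent(1,4) w1 w2 w_pos eq'
          Lfun_tendsto[OF K_asym] e ls_pos ls_fin])
qed

end
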